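(* Let $M, K, P, N$ be positive integers with $K \le P$. Let $\mathbf{A} \in \mathbb{R}^{M \times N}$ be any matrix such that each column has at least one nonzero entry. Let $\mathbf{F} \in \mathbb{R}^{P \times N}$ be any matrix such that for every set $\chi \subseteq \{1,\ldots,P\}$ with $|\chi| = K$, the span of the rows of $\mathbf{F}$ indexed by $\chi$ contains the span of the $M$ rows of $\mathbf{A}$. Then the average sparsity $\bar{s}$ over the rows of $\mathbf{F}$ satisfies $$\bar{s} \ge \frac{N}{P}\,(P - K + 1).$$
   Context: The sparsity of a vector is its number of nonzero entries; $\bar{s} = \frac{1}{P}\sum_{i=1}^P \|\mathbf{f}_i\|_0$, where $\mathbf{f}_i^T$ is the $i$-th row of $\mathbf{F}$ and $\|\cdot\|_0$ counts nonzero entries. *)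

theory Defs
  imports "HOL-Analysis.Analysis"
begin

text \<open>Matrices of size m x n are represented as functions nat => nat => real,
  with entries only meaningful for indices i < m, j < n (0-based).\<close>
definition row_vec :: "nat \<Rightarrow> (nat \<Rightarrow> nat \<Rightarrow> real) \<Rightarrow> nat \<Rightarrow> (nat \<Rightarrow> real)" where
  "row_vec n X i = (\<lambda>j. if j < n then X i j else 0)"

definition row_span :: "nat \<Rightarrow> (nat \<Rightarrow> nat \<Rightarrow> real) \<Rightarrow> nat set \<Rightarrow> (nat \<Rightarrow> real) set" where
  "row_span n X I = {v. \<exists>c. v = (\<lambda>j. \<Sum>i\<in>I. c i * row_vec n X i j)}"

definition row_l0 :: "nat \<Rightarrow> (nat \<Rightarrow> nat \<Rightarrow> real) \<Rightarrow> nat \<Rightarrow> nat" where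
  "row_l0 n X i = card {j. j < n \<and> X i j \<noteq> 0}"

definition avg_sparsity :: "nat \<Rightarrow> nat \<Rightarrow> (nat \<Rightarrow> nat \<Rightarrow> real) \<Rightarrow> real" where
  "avg_sparsity P N F = (1 / real P) * (\<Sum>i<P. real (row_l0 N F i))"

end

theory Submission
  imports Defs
begin

text \<open>Fix a column j and a row a of A with a nonzero entry in column j. If the rows of F
  vanishing in column j numbered at least K, then K of them would span a space containing a,
  yet every vector in their span vanishes in column j. Hence column j of F has at least
  P - K + 1 nonzero entries, and summing over the N columns counts the nonzeros of F.\<close>

lemma row_vec_in_row_span:
  assumes "finite I" and "i \<in> I"
  shows "row_vec n X i \<in> row_span n X I"
proof -
  have "(\<Sum>k\<in>I. of_bool (k = i) * row_vec n X k j) = row_vec n X i j" for j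
    using assms by simp
  then have "row_vec n X i = (\<lambda>j. \<Sum>k\<in>I. of_bool (k = i) * row_vec n X k j)"
    by simp
  then show ?thesis
    unfolding row_span_def by (intro CollectI exI)
qed

lemma row_span_entry_eq_0:
  assumes "v \<in> row_span n X S" and "j < n" and "\<forall>i\<in>S. X i j = 0"
  shows "v j = 0"
proof -
  obtain c where "v = (\<lambda>j. \<Sum>i\<in>S. c i * row_vec n X i j)"
    using assms(1) unfolding row_span_def by blast
  with assms(2,3) show ?thesis
    by (simp add: row_vec_def)
qed

lemma card_vanishing_rows_less:
  assumes span: "\<forall>S. S \<subseteq> {..<P} \<and> card S = K \<longrightarrow> v \<in> row_span n F S"
    and "j < n" and "v j \<noteq> 0"
  shows "card {i. i < P \<and> F i j = 0} < K"
proof (rule ccontr)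
  assume "\<not> ?thesis"
  then obtain S where S: "S \<subseteq> {i. i < P \<and> F i j = 0}" "card S = K"
    by (meson not_less obtain_subset_with_card_n)
  then have "v \<in> row_span n F S"
    using span by auto
  with S(1) \<open>j < n\<close> have "v j = 0"
    by (intro row_span_entry_eq_0) auto
  with \<open>v j \<noteq> 0\<close> show False ..
qed

lemma card_nonvanishing_rows_ge:
  assumes "\<forall>S. S \<subseteq> {..<P} \<and> card S = K \<longrightarrow> v \<in> row_span n F S"
    and "j < n" and "v j \<noteq> 0" and "K \<le> P"
  shows "P - K + 1 \<le> card {i. i < P \<and> F i j \<noteq> 0}"
proof -
  have "{i. i < P \<and> F i j \<noteq> 0} = {..<P} - {i. i < P \<and> F i j = 0}"
    by auto
  then have "card {i. i < P \<and> F i j \<noteq> 0} = P - card {i. i < P \<and> F i j = 0}"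
    using card_Diff_subset[of "{i. i < P \<and> F i j = 0}" "{..<P}"] by (auto intro: finite_subset)
  with card_vanishing_rows_less[OF assms(1-3)] assms(4) show ?thesis
    by linarith
qed

lemma sum_row_l0_eq_sum_column_nonzeros:
  "(\<Sum>i<P. row_l0 N F i) = (\<Sum>j<N. card {i. i < P \<and> F i j \<noteq> 0})"
proof -
  have count: "card {x. x < m \<and> p x} = (\<Sum>x<m. if p x then 1 else 0)" for m and p :: "nat \<Rightarrow> bool"
    by (simp add: sum.If_cases Int_def conj_commute)
  show ?thesis
    unfolding row_l0_def count by (rule sum.swap)
qed

theorem theorem2:
  fixes M K P N :: nat
    and A F :: "nat \<Rightarrow> nat \<Rightarrow> real"
  assumes "0 < M" and "0 < K" and "0 < P" and "0 < N"
    and "K \<le> P"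
    and A_cols: "\<forall>j<N. \<exists>i<M. A i j \<noteq> 0"
    and F_span: "\<forall>S. S \<subseteq> {..<P} \<and> card S = K \<longrightarrow>
                   row_span N A {..<M} \<subseteq> row_span N F S"
  shows "avg_sparsity P N F \<ge> real N / real P * (real P - real K + 1)"
proof -
  have column: "P - K + 1 \<le> card {i. i < P \<and> F i j \<noteq> 0}" if "j < N" for j
  proof -
    obtain a where "a < M" and "A a j \<noteq> 0"
      using A_cols \<open>j < N\<close> by blast
    then have "row_vec N A a \<in> row_span N A {..<M}" and "row_vec N A a j \<noteq> 0"
      using \<open>j < N\<close> by (simp_all add: row_vec_in_row_span[of "{..<M}"]) (simp add: row_vec_def)
    with F_span \<open>j < N\<close> \<open>K \<le> P\<close> show ?thesis
      by (intro card_nonvanishing_rows_ge[where v = "row_vec N A a"]) auto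
  qed
  have "N * (P - K + 1) \<le> (\<Sum>i<P. row_l0 N F i)"
    unfolding sum_row_l0_eq_sum_column_nonzeros
    using sum_mono[of "{..<N}" "\<lambda>_. P - K + 1"] column by simp
  then have "real (N * (P - K + 1)) \<le> (\<Sum>i<P. real (row_l0 N F i))"
    by (metis of_nat_le_iff of_nat_sum)
  moreover have "real (N * (P - K + 1)) = real N * (real P - real K + 1)"
    using \<open>K \<le> P\<close> by (simp add: of_nat_diff distrib_left)
  ultimately have "real N * (real P - real K + 1) \<le> (\<Sum>i<P. real (row_l0 N F i))"
    by simp
  with \<open>0 < P\<close> show ?thesis
    unfolding avg_sparsity_def by (simp add: divide_right_mono)
qed

end
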